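(* Let $\Gamma$ be a finite multiset of formulas and $G$ a formula such that the sequent $G\supset\bot,\Gamma\longrightarrow G$ has an $\mathbf{I}$-proof in which no $\forall$-L and no $\supset$-R rules are used. Then there is an $\mathbf{I}_G$-proof of $\Gamma\longrightarrow G$ in which no $\forall$-L and no $\supset$-R rules are used.
   Context: Formulas are first-order formulas built from atomic formulas and the logical constants $\top$, $\bot$ (not counted as atomic) using $\land,\lor,\supset,\forall,\exists$; $B[t/x]$ is capture-avoiding substitution of term $t$ for free $x$ in $B$. A sequent $\Gamma\longrightarrow\Delta$ is a pair of finite multisets of formulas; $B,\Gamma$ denotes $\Gamma$ with an extra occurrence of $B$. A sequent is an axiom if $\top\in\Delta$ or some formula that is $\bot$ or atomic occurs in both $\Gamma$ and $\Delta$. Writing premises $\Rightarrow$ conclusion, the rules are all instances of: contr-L: $B,B,\Gamma\longrightarrow\Delta\Rightarrow B,\Gamma\longrightarrow\Delta$; contr-R: $\Gamma\longrightarrow\Delta,B,B\Rightarrow\Gamma\longrightarrow\Delta,B$; $\bot$-R: $\Gamma\longrightarrow\Delta,\bot\Rightarrow\Gamma\longrightarrow\Delta,D$; $\land$-L: $B,\Gamma\longrightarrow\Delta\Rightarrow B\land D,\Gamma\longrightarrow\Delta$ and $D,\Gamma\longrightarrow\Delta\Rightarrow B\land D,\Gamma\longrightarrow\Delta$; $\lor$-L: $B,\Gamma\longrightarrow\Delta$ and $D,\Gamma\longrightarrow\Delta\Rightarrow B\lor D,\Gamma\longrightarrow\Delta$; $\land$-R: $\Gamma\longrightarrow\Delta,B$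 and $\Gamma\longrightarrow\Delta,D\Rightarrow\Gamma\longrightarrow\Delta,B\land D$; $\lor$-R: $\Gamma\longrightarrow\Delta,B\Rightarrow\Gamma\longrightarrow\Delta,B\lor D$ and $\Gamma\longrightarrow\Delta,D\Rightarrow\Gamma\longrightarrow\Delta,B\lor D$; $\supset$-L: $\Gamma\longrightarrow\Delta,B$ and $D,\Gamma\longrightarrow\Theta\Rightarrow B\supset D,\Gamma\longrightarrow\Delta,\Theta$; $\supset$-R: $B,\Gamma\longrightarrow\Delta,D\Rightarrow\Gamma\longrightarrow\Delta,B\supset D$; $\forall$-L: $B[t/x],\Gamma\longrightarrow\Delta\Rightarrow\forall x B,\Gamma\longrightarrow\Delta$; $\exists$-R: $\Gamma\longrightarrow\Delta,B[t/x]\Rightarrow\Gamma\longrightarrow\Delta,\exists x B$ ($t$ any term); $\exists$-L: $B[c/x],\Gamma\longrightarrow\Delta\Rightarrow\exists x B,\Gamma\longrightarrow\Delta$; $\forall$-R: $\Gamma\longrightarrow\Delta,B[c/x]\Rightarrow\Gamma\longrightarrow\Delta,\forall x B$, where the constant $c$ does not occur in the conclusion. A $\mathbf{C}$-proof is a finite tree of sequents with axioms at the leaves, each internal node being the conclusion of a rule instance whose premises are its children. An $\mathbf{I}$-proof is a $\mathbf{C}$-proof in which every sequent has exactly one formula in its succedent. For a fixed formula $G$, an $\mathbf{I}_G$-proof is a derivation, all of whose sequents have exactly one succedent formula and whose leaves are axioms, built with the rules available for $\mathbf{I}$-proofs except that: the $\lor$-L rule is removed; the constant $c$ in $\exists$-L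 and $\forall$-R must additionally not occur in $G$; and the following two rules are added ($F$ any formula, $\Delta$ any multiset): $\lor$-L$_G$: $B,\Delta\longrightarrow F$ and $D,\Delta\longrightarrow G\ \Rightarrow\ B\lor D,\Delta\longrightarrow F$; res$_G$: $\Delta\longrightarrow G\ \Rightarrow\ \Delta\longrightarrow F$. A rule "is used" if some instance of that schema occurs in the proof. *)

theory Defs
  imports Main "HOL-Library.Multiset"
begin

text \<open>Terms: variables (de Bruijn indices; loose indices are free variables) and
  function applications; a constant is a 0-ary function symbol.\<close>
datatype tm = Var nat | Fn string "tm list"

text \<open>Formulas. Top and Bot are logical constants (not atomic).
  All B / Ex B bind de Bruijn index 0 in B.\<close>
datatype fm = Atom string "tm list" | Top | Bot
  | And fm fm | Or fm fm | Imp fm fm | All fm | Ex fm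

primrec is_atom :: "fm \<Rightarrow> bool" where
  "is_atom (Atom p ts) = True" | "is_atom Top = False" | "is_atom Bot = False"
| "is_atom (And a b) = False" | "is_atom (Or a b) = False" | "is_atom (Imp a b) = False"
| "is_atom (All a) = False" | "is_atom (Ex a) = False"

fun lift_tm :: "nat \<Rightarrow> tm \<Rightarrow> tm" where
  "lift_tm k (Var i) = (if i < k then Var i else Var (Suc i))"
| "lift_tm k (Fn f ts) = Fn f (map (lift_tm k) ts)"

text \<open>Substitution of s for index k (indices above k are decremented, since the binder disappears).\<close>
fun subst_tm :: "nat \<Rightarrow> tm \<Rightarrow> tm \<Rightarrow> tm" where
  "subst_tm k s (Var i) = (if i < k then Var i else if i = k then s else Var (i - 1))"
| "subst_tm k s (Fn f ts) = Fn f (map (subst_tm k s) ts)"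

primrec subst_fm :: "nat \<Rightarrow> tm \<Rightarrow> fm \<Rightarrow> fm" where
  "subst_fm k s (Atom p ts) = Atom p (map (subst_tm k s) ts)"
| "subst_fm k s Top = Top"
| "subst_fm k s Bot = Bot"
| "subst_fm k s (And a b) = And (subst_fm k s a) (subst_fm k s b)"
| "subst_fm k s (Or a b) = Or (subst_fm k s a) (subst_fm k s b)"
| "subst_fm k s (Imp a b) = Imp (subst_fm k s a) (subst_fm k s b)"
| "subst_fm k s (All a) = All (subst_fm (Suc k) (lift_tm 0 s) a)"
| "subst_fm k s (Ex a) = Ex (subst_fm (Suc k) (lift_tm 0 s) a)"

text \<open>B[t/x] where x is the variable bound by the quantifier whose body is B.\<close>
definition inst :: "fm \<Rightarrow> tm \<Rightarrow> fm" where
  "inst B t = subst_fm 0 t B"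

fun consts_tm :: "tm \<Rightarrow> string set" where
  "consts_tm (Var i) = {}"
| "consts_tm (Fn f ts) = (if ts = [] then {f} else {}) \<union> \<Union> (set (map consts_tm ts))"

primrec consts_fm :: "fm \<Rightarrow> string set" where
  "consts_fm (Atom p ts) = \<Union> (set (map consts_tm ts))"
| "consts_fm Top = {}"
| "consts_fm Bot = {}"
| "consts_fm (And a b) = consts_fm a \<union> consts_fm b"
| "consts_fm (Or a b) = consts_fm a \<union> consts_fm b"
| "consts_fm (Imp a b) = consts_fm a \<union> consts_fm b"
| "consts_fm (All a) = consts_fm a"
| "consts_fm (Ex a) = consts_fm a"

definition consts_ms :: "fm multiset \<Rightarrow> string set" where
  "consts_ms \<Gamma> = \<Union> (consts_fm ` set_mset \<Gamma>)"

definition axiom1 :: "fm multiset \<Rightarrow> fm \<Rightarrow> bool" where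
  "axiom1 \<Gamma> F \<longleftrightarrow> F = Top \<or> ((F = Bot \<or> is_atom F) \<and> F \<in># \<Gamma>)"

datatype rule = ContrL | BotR | AndL | OrL | AndR | OrR | ImpL | ImpR | AllL | ExR | ExL | AllR
  | OrLG | ResG

text \<open>\<open>Iprf Rs \<Gamma> F\<close>: there is an I-proof of \<open>\<Gamma> \<longrightarrow> F\<close> using only rules whose label is in \<open>Rs\<close>.
  (In an I-proof every sequent has one succedent formula, so contr-R can never be applied and
  the succedent context \<open>\<Delta>\<close> of \<open>\<bottom>\<close>-R, \<open>\<supset>\<close>-L is empty.)\<close>
inductive Iprf :: "rule set \<Rightarrow> fm multiset \<Rightarrow> fm \<Rightarrow> bool" for Rs where
  ax: "axiom1 \<Gamma> F \<Longrightarrow> Iprf Rs \<Gamma> F"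
| contrL: "ContrL \<in> Rs \<Longrightarrow> Iprf Rs (add_mset B (add_mset B \<Gamma>)) F \<Longrightarrow> Iprf Rs (add_mset B \<Gamma>) F"
| botR: "BotR \<in> Rs \<Longrightarrow> Iprf Rs \<Gamma> Bot \<Longrightarrow> Iprf Rs \<Gamma> D"
| andL1: "AndL \<in> Rs \<Longrightarrow> Iprf Rs (add_mset B \<Gamma>) F \<Longrightarrow> Iprf Rs (add_mset (And B D) \<Gamma>) F"
| andL2: "AndL \<in> Rs \<Longrightarrow> Iprf Rs (add_mset D \<Gamma>) F \<Longrightarrow> Iprf Rs (add_mset (And B D) \<Gamma>) F"
| orL: "OrL \<in> Rs \<Longrightarrow> Iprf Rs (add_mset B \<Gamma>) F \<Longrightarrow> Iprf Rs (add_mset D \<Gamma>) F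
        \<Longrightarrow> Iprf Rs (add_mset (Or B D) \<Gamma>) F"
| andR: "AndR \<in> Rs \<Longrightarrow> Iprf Rs \<Gamma> B \<Longrightarrow> Iprf Rs \<Gamma> D \<Longrightarrow> Iprf Rs \<Gamma> (And B D)"
| orR1: "OrR \<in> Rs \<Longrightarrow> Iprf Rs \<Gamma> B \<Longrightarrow> Iprf Rs \<Gamma> (Or B D)"
| orR2: "OrR \<in> Rs \<Longrightarrow> Iprf Rs \<Gamma> D \<Longrightarrow> Iprf Rs \<Gamma> (Or B D)"
| impL: "ImpL \<in> Rs \<Longrightarrow> Iprf Rs \<Gamma> B \<Longrightarrow> Iprf Rs (add_mset D \<Gamma>) E
        \<Longrightarrow> Iprf Rs (add_mset (Imp B D) \<Gamma>) E"
| impR: "ImpR \<in> Rs \<Longrightarrow> Iprf Rs (add_mset B \<Gamma>) D \<Longrightarrow> Iprf Rs \<Gamma> (Imp B D)"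
| allL: "AllL \<in> Rs \<Longrightarrow> Iprf Rs (add_mset (inst B t) \<Gamma>) F \<Longrightarrow> Iprf Rs (add_mset (All B) \<Gamma>) F"
| exR: "ExR \<in> Rs \<Longrightarrow> Iprf Rs \<Gamma> (inst B t) \<Longrightarrow> Iprf Rs \<Gamma> (Ex B)"
| exL: "ExL \<in> Rs \<Longrightarrow> c \<notin> consts_ms (add_mset (Ex B) \<Gamma>) \<Longrightarrow> c \<notin> consts_fm F
        \<Longrightarrow> Iprf Rs (add_mset (inst B (Fn c [])) \<Gamma>) F \<Longrightarrow> Iprf Rs (add_mset (Ex B) \<Gamma>) F"
| allR: "AllR \<in> Rs \<Longrightarrow> c \<notin> consts_ms \<Gamma> \<Longrightarrow> c \<notin> consts_fm (All B)
        \<Longrightarrow> Iprf Rs \<Gamma> (inst B (Fn c [])) \<Longrightarrow> Iprf Rs \<Gamma> (All B)"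

inductive IGprf :: "fm \<Rightarrow> rule set \<Rightarrow> fm multiset \<Rightarrow> fm \<Rightarrow> bool" for G Rs where
  ax: "axiom1 \<Gamma> F \<Longrightarrow> IGprf G Rs \<Gamma> F"
| contrL: "ContrL \<in> Rs \<Longrightarrow> IGprf G Rs (add_mset B (add_mset B \<Gamma>)) F \<Longrightarrow> IGprf G Rs (add_mset B \<Gamma>) F"
| botR: "BotR \<in> Rs \<Longrightarrow> IGprf G Rs \<Gamma> Bot \<Longrightarrow> IGprf G Rs \<Gamma> D"
| andL1: "AndL \<in> Rs \<Longrightarrow> IGprf G Rs (add_mset B \<Gamma>) F \<Longrightarrow> IGprf G Rs (add_mset (And B D) \<Gamma>) F"
| andL2: "AndL \<in> Rs \<Longrightarrow> IGprf G Rs (add_mset D \<Gamma>) F \<Longrightarrow> IGprf G Rs (add_mset (And B D) \<Gamma>) F"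
| andR: "AndR \<in> Rs \<Longrightarrow> IGprf G Rs \<Gamma> B \<Longrightarrow> IGprf G Rs \<Gamma> D \<Longrightarrow> IGprf G Rs \<Gamma> (And B D)"
| orR1: "OrR \<in> Rs \<Longrightarrow> IGprf G Rs \<Gamma> B \<Longrightarrow> IGprf G Rs \<Gamma> (Or B D)"
| orR2: "OrR \<in> Rs \<Longrightarrow> IGprf G Rs \<Gamma> D \<Longrightarrow> IGprf G Rs \<Gamma> (Or B D)"
| impL: "ImpL \<in> Rs \<Longrightarrow> IGprf G Rs \<Gamma> B \<Longrightarrow> IGprf G Rs (add_mset D \<Gamma>) E
        \<Longrightarrow> IGprf G Rs (add_mset (Imp B D) \<Gamma>) E"
| impR: "ImpR \<in> Rs \<Longrightarrow> IGprf G Rs (add_mset B \<Gamma>) D \<Longrightarrow> IGprf G Rs \<Gamma> (Imp B D)"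
| allL: "AllL \<in> Rs \<Longrightarrow> IGprf G Rs (add_mset (inst B t) \<Gamma>) F \<Longrightarrow> IGprf G Rs (add_mset (All B) \<Gamma>) F"
| exR: "ExR \<in> Rs \<Longrightarrow> IGprf G Rs \<Gamma> (inst B t) \<Longrightarrow> IGprf G Rs \<Gamma> (Ex B)"
| exL: "ExL \<in> Rs \<Longrightarrow> c \<notin> consts_ms (add_mset (Ex B) \<Gamma>) \<Longrightarrow> c \<notin> consts_fm F \<Longrightarrow> c \<notin> consts_fm G
        \<Longrightarrow> IGprf G Rs (add_mset (inst B (Fn c [])) \<Gamma>) F \<Longrightarrow> IGprf G Rs (add_mset (Ex B) \<Gamma>) F"
| allR: "AllR \<in> Rs \<Longrightarrow> c \<notin> consts_ms \<Gamma> \<Longrightarrow> c \<notin> consts_fm (All B) \<Longrightarrow> c \<notin> consts_fm G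
        \<Longrightarrow> IGprf G Rs \<Gamma> (inst B (Fn c [])) \<Longrightarrow> IGprf G Rs \<Gamma> (All B)"
| orLG: "OrLG \<in> Rs \<Longrightarrow> IGprf G Rs (add_mset B \<Delta>) F \<Longrightarrow> IGprf G Rs (add_mset D \<Delta>) G
        \<Longrightarrow> IGprf G Rs (add_mset (Or B D) \<Delta>) F"
| resG: "ResG \<in> Rs \<Longrightarrow> IGprf G Rs \<Delta> G \<Longrightarrow> IGprf G Rs \<Delta> F"

end

theory Submission
  imports Defs "HOL-Combinatorics.Transposition"
begin

(* A continuation-passing translation. An I-proof of G \<supset> \<bottom>, D \<longrightarrow> F yields an I_G-proof of
   S \<longrightarrow> G for every context S containing D, given a continuation turning I_G-proofs of F over
   extensions of S into I_G-proofs of G. Left rules act on S directly, the principal formula being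
   kept by contraction; right rules are absorbed into the continuation; as every branch now ends
   in G, \<or>-L becomes \<or>-L_G; and \<supset>-L on G \<supset> \<bottom> simply hands over its left premise, a proof of G.
   At the root the continuation is the identity. *)

section \<open>Constants and their renaming\<close>

fun rename_tm :: "(string \<Rightarrow> string) \<Rightarrow> tm \<Rightarrow> tm" where
  "rename_tm p (Var i) = Var i"
| "rename_tm p (Fn f ts) = Fn (if ts = [] then p f else f) (map (rename_tm p) ts)"

primrec rename_fm :: "(string \<Rightarrow> string) \<Rightarrow> fm \<Rightarrow> fm" where
  "rename_fm p (Atom q ts) = Atom q (map (rename_tm p) ts)"
| "rename_fm p Top = Top"
| "rename_fm p Bot = Bot"
| "rename_fm p (And a b) = And (rename_fm p a) (rename_fm p b)"
| "rename_fm p (Or a b) = Or (rename_fm p a) (rename_fm p b)"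
| "rename_fm p (Imp a b) = Imp (rename_fm p a) (rename_fm p b)"
| "rename_fm p (All a) = All (rename_fm p a)"
| "rename_fm p (Ex a) = Ex (rename_fm p a)"

lemma rename_tm_lift_tm: "rename_tm p (lift_tm k t) = lift_tm k (rename_tm p t)"
  by (induction t) auto

lemma rename_tm_subst_tm: "rename_tm p (subst_tm k s t) = subst_tm k (rename_tm p s) (rename_tm p t)"
  by (induction t) auto

lemma rename_fm_subst_fm: "rename_fm p (subst_fm k s B) = subst_fm k (rename_tm p s) (rename_fm p B)"
  by (induction B arbitrary: k s) (auto simp: rename_tm_subst_tm rename_tm_lift_tm)

lemma rename_fm_inst: "rename_fm p (inst B t) = inst (rename_fm p B) (rename_tm p t)"
  by (simp add: inst_def rename_fm_subst_fm)

lemma is_atom_rename_fm: "is_atom (rename_fm p B) = is_atom B"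
  by (cases B) auto

lemma axiom1_rename_fm: "axiom1 S F \<Longrightarrow> axiom1 (image_mset (rename_fm p) S) (rename_fm p F)"
  by (auto simp: axiom1_def is_atom_rename_fm)

lemma consts_tm_rename_tm: "consts_tm (rename_tm p t) = p ` consts_tm t"
  by (induction t) (auto simp: image_Union)

lemma consts_fm_rename_fm: "consts_fm (rename_fm p B) = p ` consts_fm B"
  by (induction B) (auto simp: consts_tm_rename_tm image_Union)

lemma consts_ms_rename_fm: "consts_ms (image_mset (rename_fm p) S) = p ` consts_ms S"
  by (auto simp: consts_ms_def consts_fm_rename_fm)

lemma rename_tm_cong: "(\<And>x. x \<in> consts_tm t \<Longrightarrow> p x = q x) \<Longrightarrow> rename_tm p t = rename_tm q t"
  by (induction t) auto

lemma rename_fm_cong: "(\<And>x. x \<in> consts_fm B \<Longrightarrow> p x = q x) \<Longrightarrow> rename_fm p B = rename_fm q B"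
  by (induction B) (auto intro!: rename_tm_cong)

lemma rename_ms_cong:
  "(\<And>x. x \<in> consts_ms S \<Longrightarrow> p x = q x) \<Longrightarrow> image_mset (rename_fm p) S = image_mset (rename_fm q) S"
  by (auto simp: consts_ms_def intro!: image_mset_cong rename_fm_cong)

lemma rename_tm_id: "rename_tm (\<lambda>x. x) t = t"
  by (induction t) (auto simp: map_idI)

lemma rename_fm_id: "rename_fm id = id"
proof
  show "rename_fm id B = id B" for B
    by (induction B) (auto simp: id_def rename_tm_id map_idI)
qed

lemma rename_fm_fixed: "(\<And>x. x \<in> consts_fm B \<Longrightarrow> p x = x) \<Longrightarrow> rename_fm p B = B"
  using rename_fm_cong[of B p id] by (simp add: rename_fm_id)

lemma rename_ms_fixed: "(\<And>x. x \<in> consts_ms S \<Longrightarrow> p x = x) \<Longrightarrow> image_mset (rename_fm p) S = S"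
  using rename_ms_cong[of S p id] by (simp add: rename_fm_id)

lemma rename_tm_comp: "rename_tm p (rename_tm q t) = rename_tm (p \<circ> q) t"
  by (induction t) auto

lemma rename_fm_comp: "rename_fm p \<circ> rename_fm q = rename_fm (p \<circ> q)"
proof
  show "(rename_fm p \<circ> rename_fm q) B = rename_fm (p \<circ> q) B" for B
    by (induction B) (auto simp: rename_tm_comp comp_def)
qed

lemma image_rename_transpose_twice:
  "image_mset (rename_fm (transpose c d)) (image_mset (rename_fm (transpose c d)) S) = S"
  by (simp add: multiset.map_comp rename_fm_comp rename_fm_id)

lemma consts_tm_lift_tm: "consts_tm (lift_tm k t) = consts_tm t"
  by (induction t) auto

lemma consts_tm_subst_tm: "consts_tm (subst_tm k s t) \<subseteq> consts_tm t \<union> consts_tm s"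
  by (induction t) auto

lemma consts_fm_subst_fm: "consts_fm (subst_fm k s B) \<subseteq> consts_fm B \<union> consts_tm s"
proof (induction B arbitrary: k s)
  case (Atom q ts)
  then show ?case
    using consts_tm_subst_tm by fastforce
qed (fastforce simp: consts_tm_lift_tm)+

lemma consts_fm_inst: "consts_fm (inst B t) \<subseteq> consts_fm B \<union> consts_tm t"
  by (simp add: inst_def consts_fm_subst_fm)

lemma finite_consts_tm: "finite (consts_tm t)"
  by (induction t) auto

lemma finite_consts_fm: "finite (consts_fm B)"
  by (induction B) (auto simp: finite_consts_tm)

lemma finite_consts_ms: "finite (consts_ms S)"
  by (simp add: consts_ms_def finite_consts_fm)

lemma consts_ms_add_mset [simp]: "consts_ms (add_mset X S) = consts_fm X \<union> consts_ms S"
  by (simp add: consts_ms_def)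

lemma consts_ms_union [simp]: "consts_ms (S + T) = consts_ms S \<union> consts_ms T"
  by (simp add: consts_ms_def)

lemma consts_fm_subset_consts_ms: "X \<in># S \<Longrightarrow> consts_fm X \<subseteq> consts_ms S"
  by (auto simp: consts_ms_def)

lemma consts_ms_subset_insert:
  "set_mset D \<subseteq> insert X (set_mset S) \<Longrightarrow> consts_ms D \<subseteq> consts_fm X \<union> consts_ms S"
  by (auto simp: consts_ms_def)

lemma ex_fresh_string: "finite (X :: string set) \<Longrightarrow> \<exists>d. d \<notin> X"
  by (metis ex_new_if_finite infinite_UNIV_listI)

lemma obtain_fresh_renaming:
  assumes "inj p" "c \<notin> X" "d \<notin> p ` X"
  obtains q where "inj q" "q c = d" "\<And>x. x \<in> X \<Longrightarrow> q x = p x"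
proof
  show "inj (transpose (p c) d \<circ> p)"
    using assms(1) by (simp add: inj_compose inj_transpose)
  show "(transpose (p c) d \<circ> p) c = d"
    by simp
  fix x assume "x \<in> X"
  then have "p x \<noteq> p c" "p x \<noteq> d"
    using assms by (auto dest: injD)
  then show "(transpose (p c) d \<circ> p) x = p x"
    by simp
qed

section \<open>Renaming and weakening of \<open>I\<^sub>G\<close>-proofs\<close>

lemma IGprf_rename:
  assumes "IGprf G Rs S F" "inj p"
  shows "IGprf (rename_fm p G) Rs (image_mset (rename_fm p) S) (rename_fm p F)"
  using assms
proof (induction rule: IGprf.induct)
  case (exL c B \<Gamma> F)
  have "IGprf (rename_fm p G) Rs (add_mset (Ex (rename_fm p B)) (image_mset (rename_fm p) \<Gamma>)) (rename_fm p F)"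
    by (rule IGprf.exL[of _ "p c"])
      (use exL in \<open>auto simp: consts_ms_rename_fm consts_fm_rename_fm inj_image_mem_iff rename_fm_inst\<close>)
  then show ?case
    by simp
next
  case (allR c \<Gamma> B)
  have "IGprf (rename_fm p G) Rs (image_mset (rename_fm p) \<Gamma>) (All (rename_fm p B))"
    by (rule IGprf.allR[of _ "p c"])
      (use allR in \<open>auto simp: consts_ms_rename_fm consts_fm_rename_fm inj_image_mem_iff rename_fm_inst\<close>)
  then show ?case
    by simp
qed (auto intro: IGprf.intros simp: rename_fm_inst axiom1_rename_fm)

lemma IGprf_rename_transpose:
  assumes "IGprf G Rs S F" "c \<notin> consts_fm G" "d \<notin> consts_fm G"
  shows "IGprf G Rs (image_mset (rename_fm (transpose c d)) S) (rename_fm (transpose c d) F)"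
proof -
  have "rename_fm (transpose c d) G = G"
    using assms(2,3) by (intro rename_fm_fixed transpose_apply_other) auto
  then show ?thesis
    using IGprf_rename[OF assms(1) inj_transpose[of c d]] by simp
qed

lemma IGprf_weaken: "IGprf G Rs S F \<Longrightarrow> IGprf G Rs (S + T) F"
proof (induction arbitrary: T rule: IGprf.induct)
  case (ax \<Gamma> F)
  then show ?case
    by (auto simp: axiom1_def intro!: IGprf.ax)
next
  case (exL c B \<Gamma> F)
  obtain d where d: "d \<notin> {c} \<union> consts_ms (add_mset (Ex B) \<Gamma> + T) \<union> consts_fm F \<union> consts_fm G"
    by (metis ex_fresh_string finite_Un finite_insert finite.emptyI finite_consts_ms finite_consts_fm)
  let ?\<tau> = "rename_fm (transpose c d)"
  have "IGprf G Rs (image_mset ?\<tau> (add_mset (inst B (Fn c [])) \<Gamma> + image_mset ?\<tau> T)) (?\<tau> F)"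
    by (rule IGprf_rename_transpose[OF exL.IH]) (use exL.hyps d in auto)
  moreover have "?\<tau> B = B" "?\<tau> F = F"
    using exL.hyps d by (auto intro!: rename_fm_fixed transpose_apply_other)
  moreover have "image_mset ?\<tau> \<Gamma> = \<Gamma>"
    using exL.hyps d by (auto intro!: rename_ms_fixed transpose_apply_other)
  ultimately have "IGprf G Rs (add_mset (inst B (Fn d [])) (\<Gamma> + T)) F"
    by (simp add: rename_fm_inst image_rename_transpose_twice)
  then have "IGprf G Rs (add_mset (Ex B) (\<Gamma> + T)) F"
    by (rule IGprf.exL[rotated 4]) (use exL.hyps d in auto)
  then show ?case
    by simp
next
  case (allR c \<Gamma> B)
  obtain d where d: "d \<notin> {c} \<union> consts_ms (\<Gamma> + T) \<union> consts_fm B \<union> consts_fm G"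
    by (metis ex_fresh_string finite_Un finite_insert finite.emptyI finite_consts_ms finite_consts_fm)
  let ?\<tau> = "rename_fm (transpose c d)"
  have "IGprf G Rs (image_mset ?\<tau> (\<Gamma> + image_mset ?\<tau> T)) (?\<tau> (inst B (Fn c [])))"
    by (rule IGprf_rename_transpose[OF allR.IH]) (use allR.hyps d in auto)
  moreover have "?\<tau> B = B"
    using allR.hyps d by (auto intro!: rename_fm_fixed transpose_apply_other)
  moreover have "image_mset ?\<tau> \<Gamma> = \<Gamma>"
    using allR.hyps d by (auto intro!: rename_ms_fixed transpose_apply_other)
  ultimately have "IGprf G Rs (\<Gamma> + T) (inst B (Fn d []))"
    by (simp add: rename_fm_inst image_rename_transpose_twice)
  then show ?case
    by (rule IGprf.allR[rotated 4]) (use allR.hyps d in auto)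
qed (auto intro: IGprf.intros simp: add_mset_commute)

lemma IGprf_mono: "IGprf G Rs S F \<Longrightarrow> S \<subseteq># S' \<Longrightarrow> IGprf G Rs S' F"
  by (metis IGprf_weaken subset_mset.add_diff_inverse)

lemma IGprf_contr_member:
  "IGprf G Rs (add_mset X S) F \<Longrightarrow> X \<in># S \<Longrightarrow> ContrL \<in> Rs \<Longrightarrow> IGprf G Rs S F"
  by (metis IGprf.contrL insert_DiffM)

section \<open>The continuation-passing translation\<close>

definition extends_to_goal :: "fm \<Rightarrow> rule set \<Rightarrow> string set \<Rightarrow> fm multiset \<Rightarrow> fm \<Rightarrow> bool" where
  "extends_to_goal G Rs A S F \<longleftrightarrow>
     (\<forall>S'. S \<subseteq># S' \<longrightarrow> consts_ms S' \<inter> A = {} \<longrightarrow> IGprf G Rs S' F \<longrightarrow> IGprf G Rs S' G)"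

text \<open>\<open>A\<close> collects the eigenconstants of pending \<open>\<forall>\<close>-R inferences, which must stay fresh
  wherever the continuation is invoked.\<close>
definition goal_reducible :: "fm \<Rightarrow> rule set \<Rightarrow> fm multiset \<Rightarrow> fm \<Rightarrow> bool" where
  "goal_reducible G Rs D F \<longleftrightarrow>
     (\<forall>A S. finite A \<longrightarrow> set_mset D \<subseteq> insert (Imp G Bot) (set_mset S) \<longrightarrow> consts_ms S \<inter> A = {} \<longrightarrow>
        extends_to_goal G Rs A S F \<longrightarrow> IGprf G Rs S G)"

lemma extends_to_goal_refl: "extends_to_goal G Rs A S G"
  by (simp add: extends_to_goal_def)

lemma extends_to_goal_mono: "extends_to_goal G Rs A S F \<Longrightarrow> S \<subseteq># S' \<Longrightarrow> extends_to_goal G Rs A S' F"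
  unfolding extends_to_goal_def using subset_mset.order_trans by blast

lemma extends_to_goalI:
  "(\<And>S'. S \<subseteq># S' \<Longrightarrow> consts_ms S' \<inter> A = {} \<Longrightarrow> IGprf G Rs S' F \<Longrightarrow> IGprf G Rs S' G) \<Longrightarrow>
   extends_to_goal G Rs A S F"
  by (simp add: extends_to_goal_def)

lemma goal_reducibleI:
  "(\<And>A S. finite A \<Longrightarrow> set_mset D \<subseteq> insert (Imp G Bot) (set_mset S) \<Longrightarrow> consts_ms S \<inter> A = {} \<Longrightarrow>
      extends_to_goal G Rs A S F \<Longrightarrow> IGprf G Rs S G) \<Longrightarrow> goal_reducible G Rs D F"
  by (simp add: goal_reducible_def)

lemma goal_reducibleD:
  "goal_reducible G Rs D F \<Longrightarrow> finite A \<Longrightarrow> set_mset D \<subseteq> insert (Imp G Bot) (set_mset S) \<Longrightarrow>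
   consts_ms S \<inter> A = {} \<Longrightarrow> extends_to_goal G Rs A S F \<Longrightarrow> IGprf G Rs S G"
  by (simp add: goal_reducible_def)

lemma goal_reducible_add_msetD:
  assumes "goal_reducible G Rs (add_mset X D) F" "finite A"
    "set_mset D \<subseteq> insert (Imp G Bot) (set_mset S)" "consts_fm X \<inter> A = {}" "consts_ms S \<inter> A = {}"
    "extends_to_goal G Rs A S F"
  shows "IGprf G Rs (add_mset X S) G"
proof (rule goal_reducibleD[OF assms(1,2)])
  show "set_mset (add_mset X D) \<subseteq> insert (Imp G Bot) (set_mset (add_mset X S))"
    using assms(3) by auto
  show "consts_ms (add_mset X S) \<inter> A = {}"
    using assms(4,5) by auto
  show "extends_to_goal G Rs A (add_mset X S) F"
    by (rule extends_to_goal_mono[OF assms(6)]) simp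
qed

lemma goal_reducible_axiom: "axiom1 D F \<Longrightarrow> goal_reducible G Rs D F"
proof (rule goal_reducibleI)
  fix A S
  assume "axiom1 D F" "set_mset D \<subseteq> insert (Imp G Bot) (set_mset S)" "consts_ms S \<inter> A = {}"
    and cont: "extends_to_goal G Rs A S F"
  then have "IGprf G Rs S F"
    by (auto simp: axiom1_def intro!: IGprf.ax)
  then show "IGprf G Rs S G"
    using cont \<open>consts_ms S \<inter> A = {}\<close> by (simp add: extends_to_goal_def)
qed

lemma goal_reducible_contrL:
  "goal_reducible G Rs (add_mset B (add_mset B D)) F \<Longrightarrow> goal_reducible G Rs (add_mset B D) F"
  by (simp add: goal_reducible_def)

lemma goal_reducible_right:
  assumes "goal_reducible G Rs D F'" "\<And>S. IGprf G Rs S F' \<Longrightarrow> IGprf G Rs S F"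
  shows "goal_reducible G Rs D F"
  using assms unfolding goal_reducible_def extends_to_goal_def by blast

lemma goal_reducible_andR:
  assumes "goal_reducible G Rs D B" "goal_reducible G Rs D C" "AndR \<in> Rs"
  shows "goal_reducible G Rs D (And B C)"
proof (rule goal_reducibleI)
  fix A S
  assume A: "finite A" and cover: "set_mset D \<subseteq> insert (Imp G Bot) (set_mset S)"
    and fresh: "consts_ms S \<inter> A = {}" and cont: "extends_to_goal G Rs A S (And B C)"
  have "extends_to_goal G Rs A S B"
  proof (rule extends_to_goalI)
    fix S1
    assume S1: "S \<subseteq># S1" "consts_ms S1 \<inter> A = {}" and prfB: "IGprf G Rs S1 B"
    have "extends_to_goal G Rs A S1 C"
    proof (rule extends_to_goalI)
      fix S2
      assume "S1 \<subseteq># S2" "consts_ms S2 \<inter> A = {}" "IGprf G Rs S2 C"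
      then show "IGprf G Rs S2 G"
        using cont S1 IGprf_mono[OF prfB] assms(3) unfolding extends_to_goal_def
        by (meson IGprf.andR subset_mset.order_trans)
    qed
    then show "IGprf G Rs S1 G"
      using goal_reducibleD[OF assms(2) A] cover S1 set_mset_mono by blast
  qed
  then show "IGprf G Rs S G"
    by (rule goal_reducibleD[OF assms(1) A cover fresh])
qed

lemma goal_reducible_left:
  assumes "goal_reducible G Rs (add_mset Y D) F" "X \<noteq> Imp G Bot" "consts_fm Y \<subseteq> consts_fm X"
    "\<And>S. IGprf G Rs (add_mset Y S) G \<Longrightarrow> IGprf G Rs (add_mset X S) G" "ContrL \<in> Rs"
  shows "goal_reducible G Rs (add_mset X D) F"
proof (rule goal_reducibleI)
  fix A S
  assume A: "finite A" and cover: "set_mset (add_mset X D) \<subseteq> insert (Imp G Bot) (set_mset S)"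
    and fresh: "consts_ms S \<inter> A = {}" and cont: "extends_to_goal G Rs A S F"
  have X: "X \<in># S"
    using cover assms(2) by auto
  then have "consts_fm Y \<inter> A = {}"
    using consts_fm_subset_consts_ms assms(3) fresh by blast
  then have "IGprf G Rs (add_mset Y S) G"
    using goal_reducible_add_msetD[OF assms(1) A _ _ fresh cont] cover by simp
  then show "IGprf G Rs S G"
    using IGprf_contr_member[OF assms(4) X assms(5)] by simp
qed

lemma goal_reducible_orL:
  assumes "goal_reducible G Rs (add_mset B D) F" "goal_reducible G Rs (add_mset C D) F"
    "OrLG \<in> Rs" "ContrL \<in> Rs"
  shows "goal_reducible G Rs (add_mset (Or B C) D) F"
proof (rule goal_reducibleI)
  fix A S
  assume A: "finite A" and cover: "set_mset (add_mset (Or B C) D) \<subseteq> insert (Imp G Bot) (set_mset S)"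
    and fresh: "consts_ms S \<inter> A = {}" and cont: "extends_to_goal G Rs A S F"
  have X: "Or B C \<in># S"
    using cover by auto
  then have "consts_fm B \<inter> A = {}" "consts_fm C \<inter> A = {}"
    using consts_fm_subset_consts_ms fresh by fastforce+
  then have "IGprf G Rs (add_mset B S) G" "IGprf G Rs (add_mset C S) G"
    using goal_reducible_add_msetD[OF assms(1) A _ _ fresh cont]
      goal_reducible_add_msetD[OF assms(2) A _ _ fresh cont] cover by simp_all
  then have "IGprf G Rs (add_mset (Or B C) S) G"
    using assms(3) by (rule IGprf.orLG[rotated])
  then show "IGprf G Rs S G"
    using X assms(4) by (rule IGprf_contr_member)
qed

lemma goal_reducible_impL:
  assumes "goal_reducible G Rs D B" "goal_reducible G Rs (add_mset C D) E" "ImpL \<in> Rs" "ContrL \<in> Rs"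
  shows "goal_reducible G Rs (add_mset (Imp B C) D) E"
proof (rule goal_reducibleI)
  fix A S
  assume A: "finite A" and cover: "set_mset (add_mset (Imp B C) D) \<subseteq> insert (Imp G Bot) (set_mset S)"
    and fresh: "consts_ms S \<inter> A = {}" and cont: "extends_to_goal G Rs A S E"
  have coverD: "set_mset D \<subseteq> insert (Imp G Bot) (set_mset S)"
    using cover by simp
  show "IGprf G Rs S G"
  proof (cases "Imp B C = Imp G Bot")
    case True
    \<comment> \<open>Here the left premise is already a proof of \<open>G\<close>; the premise \<open>\<bottom>, D \<longrightarrow> E\<close> is dropped.\<close>
    then show ?thesis
      using goal_reducibleD[OF assms(1) A coverD fresh] extends_to_goal_refl by simp
  next
    case False
    then have X: "Imp B C \<in># S"
      using cover by auto
    have "extends_to_goal G Rs A S B"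
    proof (rule extends_to_goalI)
      fix S1
      assume S1: "S \<subseteq># S1" and fresh1: "consts_ms S1 \<inter> A = {}" and prfB: "IGprf G Rs S1 B"
      have X1: "Imp B C \<in># S1"
        using S1 X by (rule mset_subset_eqD)
      have "IGprf G Rs (add_mset C S1) G"
      proof (rule goal_reducible_add_msetD[OF assms(2) A])
        show "set_mset D \<subseteq> insert (Imp G Bot) (set_mset S1)"
          using coverD S1 set_mset_mono by blast
        show "consts_fm C \<inter> A = {}"
          using consts_fm_subset_consts_ms[OF X1] fresh1 by auto
        show "extends_to_goal G Rs A S1 E"
          using cont S1 by (rule extends_to_goal_mono)
      qed (rule fresh1)
      then have "IGprf G Rs (add_mset (Imp B C) S1) G"
        using prfB assms(3) by (auto intro: IGprf.impL)
      then show "IGprf G Rs S1 G"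
        using X1 assms(4) by (rule IGprf_contr_member)
    qed
    then show ?thesis
      by (rule goal_reducibleD[OF assms(1) A coverD fresh])
  qed
qed

lemma goal_reducible_exL:
  assumes "\<And>d. d \<notin> consts_ms (add_mset (Ex B) D) \<union> consts_fm F \<Longrightarrow>
      goal_reducible G Rs (add_mset (inst B (Fn d [])) D) F"
    "ExL \<in> Rs" "ContrL \<in> Rs"
  shows "goal_reducible G Rs (add_mset (Ex B) D) F"
proof (rule goal_reducibleI)
  fix A S
  assume A: "finite A" and cover: "set_mset (add_mset (Ex B) D) \<subseteq> insert (Imp G Bot) (set_mset S)"
    and fresh: "consts_ms S \<inter> A = {}" and cont: "extends_to_goal G Rs A S F"
  have X: "Ex B \<in># S"
    using cover by auto
  obtain d where d: "d \<notin> consts_ms S \<union> consts_fm G \<union> consts_fm F \<union> A"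
    by (metis A ex_fresh_string finite_Un finite_consts_ms finite_consts_fm)
  have "goal_reducible G Rs (add_mset (inst B (Fn d [])) D) F"
    using assms(1) consts_ms_subset_insert[OF cover] d by auto
  moreover have "consts_fm (inst B (Fn d [])) \<inter> A = {}"
    using consts_fm_inst[of B "Fn d []"] consts_fm_subset_consts_ms[OF X] fresh d by auto
  ultimately have "IGprf G Rs (add_mset (inst B (Fn d [])) S) G"
    using goal_reducible_add_msetD A cover fresh cont by simp
  then have "IGprf G Rs (add_mset (Ex B) S) G"
    by (rule IGprf.exL[rotated 4]) (use assms(2) d consts_fm_subset_consts_ms[OF X] in auto)
  then show "IGprf G Rs S G"
    using X assms(3) by (rule IGprf_contr_member)
qed

lemma goal_reducible_allR:
  assumes "\<And>d. d \<notin> consts_ms D \<union> consts_fm (All B) \<Longrightarrow> goal_reducible G Rs D (inst B (Fn d []))"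
    "AllR \<in> Rs"
  shows "goal_reducible G Rs D (All B)"
proof (rule goal_reducibleI)
  fix A S
  assume A: "finite A" and cover: "set_mset D \<subseteq> insert (Imp G Bot) (set_mset S)"
    and fresh: "consts_ms S \<inter> A = {}" and cont: "extends_to_goal G Rs A S (All B)"
  obtain d where d: "d \<notin> consts_ms S \<union> consts_fm G \<union> consts_fm B \<union> A"
    by (metis A ex_fresh_string finite_Un finite_consts_ms finite_consts_fm)
  have "goal_reducible G Rs D (inst B (Fn d []))"
    using assms(1) consts_ms_subset_insert[OF cover] d by auto
  moreover have "extends_to_goal G Rs (insert d A) S (inst B (Fn d []))"
  proof (rule extends_to_goalI)
    fix S1
    assume S1: "S \<subseteq># S1" and fresh1: "consts_ms S1 \<inter> insert d A = {}"
      and premise: "IGprf G Rs S1 (inst B (Fn d []))"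
    have "IGprf G Rs S1 (All B)"
      by (rule IGprf.allR[OF assms(2) _ _ _ premise]) (use fresh1 d in auto)
    then show "IGprf G Rs S1 G"
      using cont S1 fresh1 unfolding extends_to_goal_def by blast
  qed
  ultimately show "IGprf G Rs S G"
    using A fresh d by (intro goal_reducibleD[OF _ _ cover]) auto
qed

text \<open>Quantifying over injective renamings lets the \<open>\<exists>\<close>-L and \<open>\<forall>\<close>-R cases replace the
  eigenconstant of the I-proof by one that is also fresh for the target context and for \<open>G\<close>.\<close>
lemma Iprf_goal_reducible:
  assumes "Iprf Rs D F" "AllL \<notin> Rs" "ImpR \<notin> Rs" "Rs - {OrL} \<union> {ContrL, OrLG} \<subseteq> Rs'" "inj p"
  shows "goal_reducible G Rs' (image_mset (rename_fm p) D) (rename_fm p F)"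
  using assms(1,5)
proof (induction arbitrary: p rule: Iprf.induct)
  case (ax \<Gamma> F)
  then show ?case
    by (intro goal_reducible_axiom axiom1_rename_fm)
next
  case (contrL B \<Gamma> F)
  then show ?case
    by (auto intro: goal_reducible_contrL)
next
  case (botR \<Gamma> D)
  show ?case
    by (rule goal_reducible_right[OF botR.IH[OF botR.prems]])
      (use botR.hyps assms(4) in \<open>auto intro: IGprf.botR\<close>)
next
  case (andL1 B \<Gamma> F D)
  have "goal_reducible G Rs' (add_mset (And (rename_fm p B) (rename_fm p D)) (image_mset (rename_fm p) \<Gamma>))
      (rename_fm p F)"
    by (rule goal_reducible_left[where Y = "rename_fm p B"])
      (use andL1 assms(4) in \<open>auto intro: IGprf.andL1\<close>)
  then show ?case
    by simp
next
  case (andL2 D \<Gamma> F B)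
  have "goal_reducible G Rs' (add_mset (And (rename_fm p B) (rename_fm p D)) (image_mset (rename_fm p) \<Gamma>))
      (rename_fm p F)"
    by (rule goal_reducible_left[where Y = "rename_fm p D"])
      (use andL2 assms(4) in \<open>auto intro: IGprf.andL2\<close>)
  then show ?case
    by simp
next
  case (orL B \<Gamma> F D)
  have "goal_reducible G Rs' (add_mset (Or (rename_fm p B) (rename_fm p D)) (image_mset (rename_fm p) \<Gamma>))
      (rename_fm p F)"
    by (rule goal_reducible_orL) (use orL assms(4) in auto)
  then show ?case
    by simp
next
  case (andR \<Gamma> B D)
  have "goal_reducible G Rs' (image_mset (rename_fm p) \<Gamma>) (And (rename_fm p B) (rename_fm p D))"
    by (rule goal_reducible_andR) (use andR assms(4) in auto)
  then show ?case
    by simp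
next
  case (orR1 \<Gamma> B D)
  show ?case
    by (rule goal_reducible_right[OF orR1.IH[OF orR1.prems]])
      (use orR1.hyps assms(4) in \<open>auto intro: IGprf.orR1\<close>)
next
  case (orR2 \<Gamma> D B)
  show ?case
    by (rule goal_reducible_right[OF orR2.IH[OF orR2.prems]])
      (use orR2.hyps assms(4) in \<open>auto intro: IGprf.orR2\<close>)
next
  case (impL \<Gamma> B D E)
  have "goal_reducible G Rs' (add_mset (Imp (rename_fm p B) (rename_fm p D)) (image_mset (rename_fm p) \<Gamma>))
      (rename_fm p E)"
    by (rule goal_reducible_impL) (use impL assms(4) in auto)
  then show ?case
    by simp
next
  case (impR B \<Gamma> D)
  then show ?case
    using assms(3) by simp
next
  case (allL B t \<Gamma> F)
  then show ?case
    using assms(2) by simp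
next
  case (exR \<Gamma> B t)
  show ?case
    by (rule goal_reducible_right[OF exR.IH[OF exR.prems]])
      (use exR.hyps assms(4) in \<open>auto intro: IGprf.exR simp: rename_fm_inst\<close>)
next
  case (exL c B \<Gamma> F)
  have "goal_reducible G Rs' (add_mset (Ex (rename_fm p B)) (image_mset (rename_fm p) \<Gamma>)) (rename_fm p F)"
  proof (rule goal_reducible_exL)
    fix d
    assume "d \<notin> consts_ms (add_mset (Ex (rename_fm p B)) (image_mset (rename_fm p) \<Gamma>)) \<union>
      consts_fm (rename_fm p F)"
    then have "d \<notin> p ` (consts_ms (add_mset (Ex B) \<Gamma>) \<union> consts_fm F)"
      by (simp add: consts_ms_rename_fm consts_fm_rename_fm image_Un)
    moreover have "c \<notin> consts_ms (add_mset (Ex B) \<Gamma>) \<union> consts_fm F"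
      using exL.hyps by simp
    ultimately obtain q where "inj q" "q c = d"
      and "\<And>x. x \<in> consts_ms (add_mset (Ex B) \<Gamma>) \<union> consts_fm F \<Longrightarrow> q x = p x"
      using obtain_fresh_renaming[OF exL.prems] by metis
    then have "rename_fm q B = rename_fm p B" "rename_fm q F = rename_fm p F"
      "image_mset (rename_fm q) \<Gamma> = image_mset (rename_fm p) \<Gamma>"
      by (auto intro!: rename_fm_cong rename_ms_cong)
    then show "goal_reducible G Rs' (add_mset (inst (rename_fm p B) (Fn d [])) (image_mset (rename_fm p) \<Gamma>))
      (rename_fm p F)"
      using exL.IH[OF \<open>inj q\<close>] \<open>q c = d\<close> by (simp add: rename_fm_inst)
  qed (use exL.hyps assms(4) in auto)
  then show ?case
    by simp
next
  case (allR c \<Gamma> B)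
  have "goal_reducible G Rs' (image_mset (rename_fm p) \<Gamma>) (All (rename_fm p B))"
  proof (rule goal_reducible_allR)
    fix d
    assume "d \<notin> consts_ms (image_mset (rename_fm p) \<Gamma>) \<union> consts_fm (All (rename_fm p B))"
    then have "d \<notin> p ` (consts_ms \<Gamma> \<union> consts_fm B)"
      by (simp add: consts_ms_rename_fm consts_fm_rename_fm image_Un)
    moreover have "c \<notin> consts_ms \<Gamma> \<union> consts_fm B"
      using allR.hyps by simp
    ultimately obtain q where "inj q" "q c = d"
      and "\<And>x. x \<in> consts_ms \<Gamma> \<union> consts_fm B \<Longrightarrow> q x = p x"
      using obtain_fresh_renaming[OF allR.prems] by metis
    then have "rename_fm q B = rename_fm p B" "image_mset (rename_fm q) \<Gamma> = image_mset (rename_fm p) \<Gamma>"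
      by (auto intro!: rename_fm_cong rename_ms_cong)
    then show "goal_reducible G Rs' (image_mset (rename_fm p) \<Gamma>) (inst (rename_fm p B) (Fn d []))"
      using allR.IH[OF \<open>inj q\<close>] \<open>q c = d\<close> by (simp add: rename_fm_inst)
  qed (use allR.hyps assms(4) in auto)
  then show ?case
    by simp
qed

lemma goal_reducible_IGprf: "goal_reducible G Rs (add_mset (Imp G Bot) \<Gamma>) G \<Longrightarrow> IGprf G Rs \<Gamma> G"
  using goal_reducibleD[of G Rs _ G "{}" \<Gamma>] extends_to_goal_refl by auto

theorem lemma4:
  fixes \<Gamma> :: "fm multiset" and G :: fm
  assumes "Iprf (UNIV - {AllL, ImpR}) (add_mset (Imp G Bot) \<Gamma>) G"
  shows "IGprf G (UNIV - {AllL, ImpR}) \<Gamma> G"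
proof -
  have "goal_reducible G (UNIV - {AllL, ImpR}) (add_mset (Imp G Bot) \<Gamma>) G"
    using Iprf_goal_reducible[OF assms, of "UNIV - {AllL, ImpR}" id] by (simp add: rename_fm_id)
  then show ?thesis
    by (rule goal_reducible_IGprf)
qed

end
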